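(* Let $p\ge 3$ be an integer, let $x$ be a right vertex of $T_H$, and let $f$ be any $2p$ distance coloring of $T_H$. Then there exists a vertex $u\in\mathcal{F}_{x,p+1}$ such that $f(u)\notin f(V(D_x^{2p}))$.
   Context: $T_H$ is the infinite hexagonal grid with vertex set $\mathbb{Z}^2$: $(i,j)$ is adjacent to $(i,j\pm1)$, and $(i,j)$ is adjacent to $(i+1,j)$ iff $i+j$ is even; no other edges. A vertex $(i,j)$ with $i+j$ even is called a right vertex. $d(u,v)$ is graph distance. For $l\in\mathbb{N}$, an $l$ distance coloring is a map $f:V(T_H)\to\{1,\dots,n\}$ with $f(u)\ne f(v)$ for all distinct $u,v$ with $d(u,v)\le l$. For a vertex $x$ and integer $k\ge0$, $\mathcal{F}_{x,k}=\{u\in V(T_H): d(x,u)=k\}$. $D_x^{2p}$ is the subgraph of $T_H$ induced by $\{w: d(w,x)\le p\}$. *)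

theory Defs
  imports Main
begin

type_synonym vert = "int \<times> int"

definition hex_adj :: "vert \<Rightarrow> vert \<Rightarrow> bool" where
  "hex_adj u v \<longleftrightarrow>
     (fst u = fst v \<and> \<bar>snd u - snd v\<bar> = 1)
   \<or> (snd u = snd v \<and> fst v = fst u + 1 \<and> even (fst u + snd u))
   \<or> (snd u = snd v \<and> fst u = fst v + 1 \<and> even (fst v + snd v))"

inductive hex_walk :: "nat \<Rightarrow> vert \<Rightarrow> vert \<Rightarrow> bool" where
  refl: "hex_walk 0 u u"
| step: "hex_adj u w \<Longrightarrow> hex_walk n w v \<Longrightarrow> hex_walk (Suc n) u v"

text \<open>Graph distance (the grid is connected, so the least walk length exists).\<close>
definition hex_dist :: "vert \<Rightarrow> vert \<Rightarrow> nat" where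
  "hex_dist u v = (LEAST n. hex_walk n u v)"

definition right_vertex :: "vert \<Rightarrow> bool" where
  "right_vertex v \<longleftrightarrow> even (fst v + snd v)"

definition distance_coloring :: "nat \<Rightarrow> nat \<Rightarrow> (vert \<Rightarrow> nat) \<Rightarrow> bool" where
  "distance_coloring l n f \<longleftrightarrow>
     (\<forall>v. f v \<in> {1..n}) \<and>
     (\<forall>u v. u \<noteq> v \<and> hex_dist u v \<le> l \<longrightarrow> f u \<noteq> f v)"

definition sphere :: "vert \<Rightarrow> nat \<Rightarrow> vert set" where
  "sphere x k = {u. hex_dist x u = k}"

definition disk_verts :: "vert \<Rightarrow> nat \<Rightarrow> vert set" where
  "disk_verts x p = {w. hex_dist w x \<le> p}"

end

theory Submission
  imports Defs
begin

(* Along an edge of T_H both the L1 displacement |di| + |dj| and the change of hex_phi, the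
   horizontal position 2i - [i + j odd], are at most one, and a greedy walk shows that the graph
   distance is exactly max (|di| + |dj|) |dhex_phi|.  After translating the right vertex x to the
   origin the spheres are explicit; the sphere of radius r has 3r vertices.
   Suppose every colour of F_{p+1} already occurs in the p-ball.  A vertex of the ball repeating
   the colour of u \<in> F_{p+1} is at distance > 2p from u, hence lies on F_p, so F_{p+1} carries
   at most |F_p| = 3p colours.  On the other hand two vertices of F_{p+1} of the same colour are,
   together with such a twin on F_p, pairwise almost antipodal; this forces both into one of two
   explicit triples, and neither triple is monochromatic.  Hence F_{p+1} carries at least
   3(p+1) - 2 colours. *)

definition hex_norm :: "int \<Rightarrow> int \<Rightarrow> int \<Rightarrow> int" where
  "hex_norm di dj dphi = max (\<bar>di\<bar> + \<bar>dj\<bar>) \<bar>dphi\<bar>"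

definition hex_phi :: "vert \<Rightarrow> int" where
  "hex_phi v = 2 * fst v - (if even (fst v + snd v) then 0 else 1)"

definition hex_metric :: "vert \<Rightarrow> vert \<Rightarrow> int" where
  "hex_metric u v = hex_norm (fst v - fst u) (snd v - snd u) (hex_phi v - hex_phi u)"

lemma hex_phi_Pair: "hex_phi (a, b) = 2 * a - (if even (a + b) then 0 else 1)"
  by (simp add: hex_phi_def)

lemma hex_phi_eq_of_even:
  "even (i + j - q) \<Longrightarrow> q = 0 \<or> q = 1 \<Longrightarrow> hex_phi (i, j) = 2 * i - q"
  unfolding hex_phi_Pair by (cases "even (i + j)") (auto; presburger)+

lemma hex_metric_Pair:
  "hex_metric (i, j) (s, t) = hex_norm (s - i) (t - j) (hex_phi (s, t) - hex_phi (i, j))"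
  by (simp add: hex_metric_def)

lemma hex_metric_origin: "hex_metric (0, 0) (i, j) = hex_norm i j (hex_phi (i, j))"
  by (simp add: hex_metric_Pair hex_phi_Pair)

lemma hex_norm_eq:
  "hex_norm x y d = k \<Longrightarrow> \<bar>x\<bar> + \<bar>y\<bar> \<le> k \<and> \<bar>d\<bar> \<le> k \<and> (\<bar>x\<bar> + \<bar>y\<bar> = k \<or> \<bar>d\<bar> = k)"
  unfolding hex_norm_def by (auto simp: max_def split: if_split_asm)

lemma hex_norm_le: "hex_norm x y d \<le> k \<Longrightarrow> \<bar>x\<bar> + \<bar>y\<bar> \<le> k \<and> \<bar>d\<bar> \<le> k"
  unfolding hex_norm_def by simp

lemma hex_norm_ge: "hex_norm x y d \<ge> c \<Longrightarrow> \<bar>x\<bar> + \<bar>y\<bar> \<ge> c \<or> \<bar>d\<bar> \<ge> c"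
  unfolding hex_norm_def by (auto simp: max_def split: if_split_asm)

lemma hex_metric_nonneg: "hex_metric u v \<ge> 0"
  unfolding hex_metric_def hex_norm_def by simp

lemma hex_metric_commute: "hex_metric u v = hex_metric v u"
  unfolding hex_metric_def hex_norm_def by (simp add: abs_minus_commute)

lemma hex_metric_self: "hex_metric u u = 0"
  unfolding hex_metric_def hex_norm_def by simp

lemma hex_metric_eq_0_iff: "hex_metric u v = 0 \<longleftrightarrow> u = v"
  unfolding hex_metric_def hex_norm_def by (cases u; cases v) auto

lemma hex_metric_triangle: "hex_metric u w \<le> hex_metric u v + hex_metric v w"
proof -
  have "\<bar>fst w - fst u\<bar> \<le> \<bar>fst v - fst u\<bar> + \<bar>fst w - fst v\<bar>"
    and "\<bar>snd w - snd u\<bar> \<le> \<bar>snd v - snd u\<bar> + \<bar>snd w - snd v\<bar>"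
    and "\<bar>hex_phi w - hex_phi u\<bar> \<le> \<bar>hex_phi v - hex_phi u\<bar> + \<bar>hex_phi w - hex_phi v\<bar>"
    by arith+
  then show ?thesis
    unfolding hex_metric_def hex_norm_def by (simp add: max_def)
qed

lemma hex_adj_bounds:
  assumes "hex_adj u w"
  shows "\<bar>fst u - fst w\<bar> + \<bar>snd u - snd w\<bar> \<le> 1 \<and> \<bar>hex_phi u - hex_phi w\<bar> \<le> 1"
proof -
  obtain a b c d where u: "u = (a, b)" and w: "w = (c, d)" by fastforce
  from assms have "(a = c \<and> (d = b + 1 \<or> d = b - 1)) \<or> (b = d \<and> c = a + 1 \<and> even (a + b))
      \<or> (b = d \<and> a = c + 1 \<and> even (c + d))"
    unfolding u w hex_adj_def by auto
  then show ?thesis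
    unfolding u w hex_phi_Pair by (auto simp: algebra_simps even_add)
qed

lemma hex_metric_le_walk: "hex_walk n u v \<Longrightarrow> hex_metric u v \<le> int n"
proof (induction rule: hex_walk.induct)
  case (refl u)
  then show ?case by (simp add: hex_metric_self)
next
  case (step u w n v)
  have "hex_metric u w \<le> 1"
    using hex_adj_bounds[OF step.hyps(1)] unfolding hex_metric_def hex_norm_def
    by (simp add: abs_minus_commute)
  then show ?case using hex_metric_triangle[of u v w] step.IH by simp
qed

text \<open>From a right (resp.\ left) vertex one of its three neighbours is one step closer to any
  other vertex.  Here \<open>(di, dj)\<close> is the coordinate difference and \<open>pv\<close> the parity defect of the
  target, so that the \<open>hex_phi\<close>-difference is \<open>2 di - pv\<close> (resp.\ \<open>2 di - pv + 1\<close>).\<close>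

lemma hex_norm_descent_right:
  fixes di dj pv k :: int
  assumes pv: "pv = 0 \<or> pv = 1" and k: "di + dj = 2 * k + pv" and ne: "di \<noteq> 0 \<or> dj \<noteq> 0"
  shows "hex_norm (di - 1) dj (2 * di - pv - 1) + 1 = hex_norm di dj (2 * di - pv)
       \<or> (dj > 0 \<and> hex_norm di (dj - 1) (2 * di - pv + 1) + 1 = hex_norm di dj (2 * di - pv))
       \<or> (dj \<le> 0 \<and> hex_norm di (dj + 1) (2 * di - pv + 1) + 1 = hex_norm di dj (2 * di - pv))"
proof -
  define D where "D = 2 * di - pv"
  show ?thesis
  proof (cases "D \<ge> 1 \<and> di \<ge> 1")
    case True
    then have "hex_norm (di - 1) dj (D - 1) + 1 = hex_norm di dj D"
      unfolding hex_norm_def by (auto simp: abs_if max_def)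
    then show ?thesis unfolding D_def by blast
  next
    case False
    have D0: "D \<le> 0" using False pv unfolding D_def by presburger
    have D00: "D = 0 \<Longrightarrow> di = 0 \<and> (dj \<ge> 2 \<or> dj \<le> -2)"
      using pv k ne unfolding D_def by presburger
    have dj0: "dj = 0 \<Longrightarrow> di \<le> -1 \<and> (di \<le> -2 \<or> pv = 1)"
      using pv k ne D0 unfolding D_def by presburger
    show ?thesis
    proof (cases "dj > 0")
      case True
      then have "hex_norm di (dj - 1) (D + 1) + 1 = hex_norm di dj D"
        using D0 D00 unfolding hex_norm_def by (auto simp: abs_if max_def)
      then show ?thesis using True unfolding D_def by blast
    next
      case False
      then have "hex_norm di (dj + 1) (D + 1) + 1 = hex_norm di dj D"
        using D0 D00 dj0 pv D_def unfolding hex_norm_def by (auto simp: abs_if max_def)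
      then show ?thesis using False unfolding D_def by simp
    qed
  qed
qed

lemma hex_norm_descent_left:
  fixes di dj pv k :: int
  assumes pv: "pv = 0 \<or> pv = 1" and k: "di + dj = 2 * k + pv - 1" and ne: "di \<noteq> 0 \<or> dj \<noteq> 0"
  shows "hex_norm (di + 1) dj (2 * di - pv + 2) + 1 = hex_norm di dj (2 * di - pv + 1)
       \<or> (dj > 0 \<and> hex_norm di (dj - 1) (2 * di - pv) + 1 = hex_norm di dj (2 * di - pv + 1))
       \<or> (dj \<le> 0 \<and> hex_norm di (dj + 1) (2 * di - pv) + 1 = hex_norm di dj (2 * di - pv + 1))"
proof (cases "2 * di - pv + 1 \<le> -1 \<and> di \<le> -1")
  case True
  then have "hex_norm (di + 1) dj (2 * di - pv + 2) + 1 = hex_norm di dj (2 * di - pv + 1)"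
    unfolding hex_norm_def by (auto simp: abs_if max_def)
  then show ?thesis by blast
next
  case False
  have D0: "2 * di - pv + 1 \<ge> 0" using False pv by presburger
  have D00: "2 * di - pv + 1 = 0 \<Longrightarrow> di = 0 \<and> (dj \<ge> 2 \<or> dj \<le> -2)"
    using pv k ne by presburger
  have dj0: "dj = 0 \<Longrightarrow> di \<ge> 1 \<and> (di \<ge> 2 \<or> pv = 0)"
    using pv k ne D0 by presburger
  show ?thesis
  proof (cases "dj > 0")
    case True
    then have "hex_norm di (dj - 1) (2 * di - pv) + 1 = hex_norm di dj (2 * di - pv + 1)"
      using D0 D00 unfolding hex_norm_def by (auto simp: abs_if max_def)
    then show ?thesis using True by blast
  next
    case False
    then have "hex_norm di (dj + 1) (2 * di - pv) + 1 = hex_norm di dj (2 * di - pv + 1)"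
      using D0 D00 dj0 pv unfolding hex_norm_def by (auto simp: abs_if max_def)
    then show ?thesis using False by simp
  qed
qed

lemma parity_of_difference:
  fixes e a g b :: int
  shows "\<exists>k. (e - a) + (g - b) = 2 * k + (if even (e + g) then 0 else 1) - (if even (a + b) then 0 else 1)"
proof -
  have "even ((e - a) + (g - b) - (if even (e + g) then 0 else 1) + (if even (a + b) then 0 else 1))"
    by (cases "even (e + g)"; cases "even (a + b)") (simp_all; presburger)+
  then obtain k where
    "(e - a) + (g - b) - (if even (e + g) then 0 else 1) + (if even (a + b) then 0 else 1) = 2 * k"
    by blast
  then show ?thesis by (intro exI[of _ k]) linarith
qed

lemma hex_adj_closer:
  assumes "u \<noteq> v"
  shows "\<exists>w. hex_adj u w \<and> hex_metric w v + 1 = hex_metric u v"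
proof -
  obtain a b e g where u: "u = (a, b)" and v: "v = (e, g)" by fastforce
  define pv where "pv = (if even (e + g) then 0 else (1::int))"
  have pv01: "pv = 0 \<or> pv = 1" unfolding pv_def by auto
  have ne: "e - a \<noteq> 0 \<or> g - b \<noteq> 0" using assms u v by auto
  have metric: "hex_metric (c, d) (e, g) = hex_norm (e - c) (g - d) (2 * e - pv - hex_phi (c, d))"
    for c d unfolding hex_metric_Pair hex_phi_Pair pv_def by simp
  show ?thesis
  proof (cases "even (a + b)")
    case True
    obtain k where k: "(e - a) + (g - b) = 2 * k + pv"
      using parity_of_difference[of e a g b] True unfolding pv_def by auto
    have phi: "hex_phi (a, b) = 2 * a" "hex_phi (a + 1, b) = 2 * a + 1"
      "hex_phi (a, b + 1) = 2 * a - 1" "hex_phi (a, b - 1) = 2 * a - 1"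
      using True by (simp_all add: hex_phi_Pair even_add)
    have "hex_adj (a, b) (a + 1, b)" "hex_adj (a, b) (a, b + 1)" "hex_adj (a, b) (a, b - 1)"
      using True unfolding hex_adj_def by simp_all
    moreover have "hex_metric (a + 1, b) (e, g) + 1 = hex_metric (a, b) (e, g)
      \<or> hex_metric (a, b - 1) (e, g) + 1 = hex_metric (a, b) (e, g)
      \<or> hex_metric (a, b + 1) (e, g) + 1 = hex_metric (a, b) (e, g)"
      using hex_norm_descent_right[OF pv01 k ne] unfolding metric phi by (auto simp: algebra_simps)
    ultimately show ?thesis using u v by blast
  next
    case False
    obtain k where k: "(e - a) + (g - b) = 2 * k + pv - 1"
      using parity_of_difference[of e a g b] False unfolding pv_def by auto
    have phi: "hex_phi (a, b) = 2 * a - 1" "hex_phi (a - 1, b) = 2 * a - 2"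
      "hex_phi (a, b + 1) = 2 * a" "hex_phi (a, b - 1) = 2 * a"
      using False by (simp_all add: hex_phi_Pair even_add)
    have "hex_adj (a, b) (a - 1, b)" "hex_adj (a, b) (a, b + 1)" "hex_adj (a, b) (a, b - 1)"
      using False unfolding hex_adj_def by simp_all
    moreover have "hex_metric (a - 1, b) (e, g) + 1 = hex_metric (a, b) (e, g)
      \<or> hex_metric (a, b - 1) (e, g) + 1 = hex_metric (a, b) (e, g)
      \<or> hex_metric (a, b + 1) (e, g) + 1 = hex_metric (a, b) (e, g)"
      using hex_norm_descent_left[OF pv01 k ne] unfolding metric phi by (auto simp: algebra_simps)
    ultimately show ?thesis using u v by blast
  qed
qed

lemma hex_walk_of_metric: "hex_metric u v = int n \<Longrightarrow> hex_walk n u v"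
proof (induction n arbitrary: u)
  case 0
  then show ?case by (simp add: hex_metric_eq_0_iff hex_walk.refl)
next
  case (Suc n)
  have "u \<noteq> v"
  proof
    assume "u = v"
    with Suc.prems show False by (simp add: hex_metric_self)
  qed
  then obtain w where "hex_adj u w" "hex_metric w v + 1 = hex_metric u v"
    using hex_adj_closer by blast
  with Suc show ?case by (simp add: hex_walk.step)
qed

theorem hex_dist_eq_metric: "hex_dist u v = nat (hex_metric u v)"
  unfolding hex_dist_def
proof (rule Least_equality)
  show "hex_walk (nat (hex_metric u v)) u v"
    using hex_walk_of_metric hex_metric_nonneg by simp
next
  show "nat (hex_metric u v) \<le> n" if "hex_walk n u v" for n
    using hex_metric_le_walk[OF that] by simp
qed

definition origin_sphere :: "int \<Rightarrow> vert set" where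
  "origin_sphere r = {v. hex_metric (0, 0) v = r}"

lemma hex_phi_on_origin_sphere:
  assumes "(i, j) \<in> origin_sphere r"
  shows "hex_phi (i, j) = 2 * i - r mod 2"
proof -
  define pu where "pu = (if even (i + j) then 0 else (1::int))"
  have phi: "hex_phi (i, j) = 2 * i - pu" unfolding pu_def hex_phi_Pair by simp
  have "hex_norm i j (2 * i - pu) = r"
    using assms by (simp add: origin_sphere_def hex_metric_origin phi)
  then have "\<bar>i\<bar> + \<bar>j\<bar> = r \<or> \<bar>2 * i - pu\<bar> = r"
    using hex_norm_eq by blast
  then have "pu = r mod 2" unfolding pu_def by (cases "even (i + j)") (simp_all; presburger)+
  then show ?thesis using phi by simp
qed

text \<open>Radii are written \<open>2 h + q\<close> with \<open>q \<in> {0, 1}\<close>: then all vertices of the sphere have the same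
  parity \<open>q\<close> of \<open>i + j\<close>, and \<open>hex_phi (i, j) = 2 i - q\<close> on it.\<close>

lemma origin_sphere_coords:
  assumes q: "q = 0 \<or> q = 1"
  shows "(i, j) \<in> origin_sphere (2 * h + q) \<longleftrightarrow>
    even (i + j - q) \<and> hex_norm i j (2 * i - q) = 2 * h + q"
proof
  assume S: "(i, j) \<in> origin_sphere (2 * h + q)"
  have phi: "hex_phi (i, j) = 2 * i - q" using hex_phi_on_origin_sphere[OF S] q by auto
  moreover have "hex_phi (i, j) = 2 * i - (if even (i + j) then 0 else 1)" by (simp add: hex_phi_Pair)
  ultimately have "even (i + j - q)" using q by (cases "even (i + j)") (auto; presburger)+
  with S phi show "even (i + j - q) \<and> hex_norm i j (2 * i - q) = 2 * h + q"
    by (simp add: origin_sphere_def hex_metric_origin)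
next
  assume "even (i + j - q) \<and> hex_norm i j (2 * i - q) = 2 * h + q"
  moreover from this have "hex_phi (i, j) = 2 * i - q" using hex_phi_eq_of_even[OF _ q] by blast
  ultimately show "(i, j) \<in> origin_sphere (2 * h + q)"
    by (simp add: origin_sphere_def hex_metric_origin)
qed

text \<open>The sphere of radius \<open>2 h + q\<close> is the union of two zigzags of \<open>2 h + 1\<close> vertices on the
  lines \<open>|i| + |j| = 2 h + q\<close> and two vertical segments on the columns \<open>i = h + q\<close> and \<open>i = -h\<close>.\<close>

definition sphere_top :: "int \<Rightarrow> int \<Rightarrow> vert set" where
  "sphere_top h q = (\<lambda>a. (a, 2 * h + q - \<bar>a\<bar>)) ` {-h..h}"

definition sphere_bottom :: "int \<Rightarrow> int \<Rightarrow> vert set" where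
  "sphere_bottom h q = (\<lambda>a. (a, -(2 * h + q - \<bar>a\<bar>))) ` {-h..h}"

definition sphere_right :: "int \<Rightarrow> int \<Rightarrow> vert set" where
  "sphere_right h q = (\<lambda>b. (h + q, -h + 2 * b)) ` {1 - q..h - 1 + q}"

definition sphere_left :: "int \<Rightarrow> int \<Rightarrow> vert set" where
  "sphere_left h q = (\<lambda>b. (-h, -h + q + 2 * b)) ` {1 - q..h - 1}"

lemma sphere_parts_subset:
  assumes h: "h \<ge> 1" and q: "q = 0 \<or> q = 1"
  shows "sphere_top h q \<union> sphere_bottom h q \<union> sphere_right h q \<union> sphere_left h q
    \<subseteq> origin_sphere (2 * h + q)"
proof -
  have mem: "(i, j) \<in> origin_sphere (2 * h + q)"
    if "even (i + j - q)" "hex_norm i j (2 * i - q) = 2 * h + q" for i j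
    using that origin_sphere_coords[OF q] by blast
  have "(a, 2 * h + q - \<bar>a\<bar>) \<in> origin_sphere (2 * h + q)"
    and "(a, -(2 * h + q - \<bar>a\<bar>)) \<in> origin_sphere (2 * h + q)" if "a \<in> {-h..h}" for a
    using that q by (intro mem; cases "a \<ge> 0"; auto simp: hex_norm_def max_def)+
  moreover have "(h + q, -h + 2 * b) \<in> origin_sphere (2 * h + q)" if "b \<in> {1 - q..h - 1 + q}" for b
    using that q by (intro mem) (auto simp: hex_norm_def max_def)
  moreover have "(-h, -h + q + 2 * b) \<in> origin_sphere (2 * h + q)" if "b \<in> {1 - q..h - 1}" for b
    using that h q by (intro mem) (auto simp: hex_norm_def max_def)
  ultimately show ?thesis
    unfolding sphere_top_def sphere_bottom_def sphere_right_def sphere_left_def by blast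
qed

lemma origin_sphere_subset_parts:
  assumes h: "h \<ge> 1" and q: "q = 0 \<or> q = 1"
  shows "origin_sphere (2 * h + q)
    \<subseteq> sphere_top h q \<union> sphere_bottom h q \<union> sphere_right h q \<union> sphere_left h q"
proof
  fix v assume "v \<in> origin_sphere (2 * h + q)"
  moreover obtain i j where v: "v = (i, j)" by fastforce
  ultimately have ev: "even (i + j - q)" and N: "hex_norm i j (2 * i - q) = 2 * h + q"
    using origin_sphere_coords[OF q] by auto
  have U: "\<bar>i\<bar> + \<bar>j\<bar> \<le> 2 * h + q" "\<bar>2 * i - q\<bar> \<le> 2 * h + q"
    "\<bar>i\<bar> + \<bar>j\<bar> = 2 * h + q \<or> \<bar>2 * i - q\<bar> = 2 * h + q"
    using hex_norm_eq[OF N] by auto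
  show "v \<in> sphere_top h q \<union> sphere_bottom h q \<union> sphere_right h q \<union> sphere_left h q"
  proof (cases "\<bar>i\<bar> \<le> h \<and> \<bar>i\<bar> + \<bar>j\<bar> = 2 * h + q")
    case True
    then have "i \<in> {-h..h}" and "v = (i, 2 * h + q - \<bar>i\<bar>) \<or> v = (i, -(2 * h + q - \<bar>i\<bar>))"
      using v by auto
    then show ?thesis unfolding sphere_top_def sphere_bottom_def by blast
  next
    case False
    then have "i = h + q \<or> i = -h" using U h q by arith
    then show ?thesis
    proof
      assume i: "i = h + q"
      have "even (j + h)" using ev i by presburger
      then obtain b where jb: "j + h = 2 * b" by blast
      have "\<bar>j\<bar> \<le> h" "q = 0 \<Longrightarrow> \<bar>j\<bar> \<noteq> h" using U(1) False i q by arith+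
      then have "b \<in> {1 - q..h - 1 + q}" using jb q by auto
      then have "v \<in> sphere_right h q"
        unfolding sphere_right_def using v i jb by (intro rev_image_eqI[of b]) auto
      then show ?thesis by blast
    next
      assume i: "i = -h"
      have "even (j + h - q)" using ev i by presburger
      then obtain b where jb: "j + h - q = 2 * b" by blast
      have "\<bar>j\<bar> \<le> h + q" "\<bar>j\<bar> \<noteq> h + q" using U(1) False i h by arith+
      then have "b \<in> {1 - q..h - 1}" using jb q by auto
      then have "v \<in> sphere_left h q"
        unfolding sphere_left_def using v i jb by (intro rev_image_eqI[of b]) auto
      then show ?thesis by blast
    qed
  qed
qed

lemma card_origin_sphere:
  assumes "r \<ge> 2"
  shows "finite (origin_sphere r)" and "card (origin_sphere r) = nat (3 * r)"
proof -
  define h q where "h = r div 2" and "q = r mod 2"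
  have r: "r = 2 * h + q" and q: "q = 0 \<or> q = 1" and h: "h \<ge> 1"
    using assms unfolding h_def q_def by auto
  let ?T = "sphere_top h q" and ?B = "sphere_bottom h q"
    and ?R = "sphere_right h q" and ?L = "sphere_left h q"
  have S: "origin_sphere r = ?T \<union> ?B \<union> ?R \<union> ?L"
    using sphere_parts_subset[OF h q] origin_sphere_subset_parts[OF h q] r by blast
  have fin: "finite ?T" "finite ?B" "finite ?R" "finite ?L"
    unfolding sphere_top_def sphere_bottom_def sphere_right_def sphere_left_def by auto
  have disj: "?T \<inter> ?B = {}" "(?T \<union> ?B) \<inter> ?R = {}" "(?T \<union> ?B \<union> ?R) \<inter> ?L = {}"
    using h q unfolding sphere_top_def sphere_bottom_def sphere_right_def sphere_left_def
    by (auto simp: image_def)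
  have card: "card ?T = nat (2 * h + 1)" "card ?B = nat (2 * h + 1)"
    "card ?R = nat (h - 1 + 2 * q)" "card ?L = nat (h - 1 + q)"
    using h q unfolding sphere_top_def sphere_bottom_def sphere_right_def sphere_left_def
    by (subst card_image; auto simp: inj_on_def)+
  show "finite (origin_sphere r)" unfolding S using fin by blast
  have "card (origin_sphere r) = card ?T + card ?B + card ?R + card ?L"
    unfolding S using fin disj by (simp add: card_Un_disjoint)
  also have "\<dots> = nat (3 * r)"
    unfolding card r using h q by (auto simp: nat_add_distrib[symmetric])
  finally show "card (origin_sphere r) = nat (3 * r)" .
qed

text \<open>A vertex at distance \<open>r\<close> and one at distance \<open>r - 1\<close> from the origin are at distance at
  most \<open>2 r - 1\<close>.  Equality forces the origin onto a geodesic between them, either for the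
  L1 part of the metric (coordinates of opposite signs) or for the \<open>hex_phi\<close> part (extreme
  values of \<open>hex_phi\<close> on both spheres).\<close>

definition l1_antipodal :: "int \<Rightarrow> int \<Rightarrow> int \<Rightarrow> int \<Rightarrow> int \<Rightarrow> bool" where
  "l1_antipodal r i j s t \<longleftrightarrow> \<bar>i\<bar> + \<bar>j\<bar> = r \<and> \<bar>s\<bar> + \<bar>t\<bar> = r - 1 \<and>
     (0 \<le> i \<and> s \<le> 0 \<or> i \<le> 0 \<and> 0 \<le> s) \<and> (0 \<le> j \<and> t \<le> 0 \<or> j \<le> 0 \<and> 0 \<le> t)"

definition phi_antipodal :: "int \<Rightarrow> int \<Rightarrow> int \<Rightarrow> bool" where
  "phi_antipodal r a b \<longleftrightarrow> (a = r \<and> b = 1 - r) \<or> (a = -r \<and> b = r - 1)"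

lemma antipodal_if_far:
  assumes u: "hex_norm i j a \<le> r" and w: "hex_norm s t b \<le> r - 1"
    and far: "2 * r - 1 \<le> hex_norm (i - s) (j - t) (a - b)"
  shows "l1_antipodal r i j s t \<or> phi_antipodal r a b"
  using hex_norm_ge[OF far]
proof
  assume far1: "2 * r - 1 \<le> \<bar>i - s\<bar> + \<bar>j - t\<bar>"
  have "\<bar>i - s\<bar> \<le> \<bar>i\<bar> + \<bar>s\<bar>" "\<bar>j - t\<bar> \<le> \<bar>j\<bar> + \<bar>t\<bar>" by arith+
  then have "\<bar>i\<bar> + \<bar>j\<bar> = r" "\<bar>s\<bar> + \<bar>t\<bar> = r - 1" and si: "\<bar>i - s\<bar> = \<bar>i\<bar> + \<bar>s\<bar>"
    and tj: "\<bar>j - t\<bar> = \<bar>j\<bar> + \<bar>t\<bar>"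
    using far1 hex_norm_le[OF u] hex_norm_le[OF w] by auto
  moreover have "0 \<le> i \<and> s \<le> 0 \<or> i \<le> 0 \<and> 0 \<le> s" using si by arith
  moreover have "0 \<le> j \<and> t \<le> 0 \<or> j \<le> 0 \<and> 0 \<le> t" using tj by arith
  ultimately show ?thesis unfolding l1_antipodal_def by blast
next
  assume "2 * r - 1 \<le> \<bar>a - b\<bar>"
  moreover have "\<bar>a\<bar> \<le> r" "\<bar>b\<bar> \<le> r - 1" using hex_norm_le[OF u] hex_norm_le[OF w] by simp_all
  ultimately show ?thesis unfolding phi_antipodal_def by arith
qed

text \<open>The two triples of pairwise almost antipodal vertices on the sphere of radius \<open>2 h + q\<close>.\<close>

definition upper_triple :: "int \<Rightarrow> int \<Rightarrow> vert set" where
  "upper_triple h q = {(0, 2 * h + q), (-h, -(h + q)), (h + q, -h)}"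

definition lower_triple :: "int \<Rightarrow> int \<Rightarrow> vert set" where
  "lower_triple h q = {(0, -(2 * h + q)), (-h, h + q), (h + q, h)}"

abbreviation in_common_triple :: "int \<Rightarrow> int \<Rightarrow> vert \<Rightarrow> vert \<Rightarrow> bool" where
  "in_common_triple h q u v \<equiv>
    (u \<in> upper_triple h q \<and> v \<in> upper_triple h q) \<or> (u \<in> lower_triple h q \<and> v \<in> lower_triple h q)"

lemma triples_subset_origin_sphere:
  assumes h: "h \<ge> 2" and q: "q = 0 \<or> q = 1"
  shows "upper_triple h q \<subseteq> origin_sphere (2 * h + q)"
    and "lower_triple h q \<subseteq> origin_sphere (2 * h + q)"
proof -
  have mem: "(i, j) \<in> origin_sphere (2 * h + q)"
    if "even (i + j - q)" "hex_norm i j (2 * i - q) = 2 * h + q" for i j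
    using that origin_sphere_coords[OF q] by blast
  show "upper_triple h q \<subseteq> origin_sphere (2 * h + q)"
    and "lower_triple h q \<subseteq> origin_sphere (2 * h + q)"
    unfolding upper_triple_def lower_triple_def
    by (intro insert_subsetI empty_subsetI mem; use h q in \<open>auto simp: hex_norm_def max_def\<close>)+
qed

lemma card_triples:
  assumes "h \<ge> 2" and "q = 0 \<or> q = 1"
  shows "card (upper_triple h q) = 3" "card (lower_triple h q) = 3"
    and "upper_triple h q \<inter> lower_triple h q = {}"
  using assms unfolding upper_triple_def lower_triple_def by auto

text \<open>In the next three lemmas \<open>(i, j)\<close> and \<open>(i', j')\<close> lie on the sphere of radius \<open>2 h + q\<close>,
  \<open>(s, t)\<close> on the sphere of radius \<open>2 h + q - 1\<close>, and \<open>far_norm\<close> says that the first two are at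
  distance at least \<open>4 h + 2 q - 1\<close>; the lemmas run through the ways in which both are almost
  antipodal to \<open>(s, t)\<close>.\<close>

lemma common_triple_l1_l1:
  fixes h q i j i' j' s t :: int
  assumes q: "q = 0 \<or> q = 1" and h: "h \<ge> 2"
    and A: "l1_antipodal (2 * h + q) i j s t" and A': "l1_antipodal (2 * h + q) i' j' s t"
    and u2: "\<bar>2 * i - q\<bar> \<le> 2 * h + q" and u'2: "\<bar>2 * i' - q\<bar> \<le> 2 * h + q"
    and w2: "\<bar>2 * s + q - 1\<bar> \<le> 2 * h + q - 1"
    and far_norm: "4 * h + 2 * q - 1 \<le> hex_norm (i - i') (j - j') (2 * i - 2 * i')"
  shows "in_common_triple h q (i, j) (i', j')"
proof -
  have far: "\<bar>i - i'\<bar> + \<bar>j - j'\<bar> \<ge> 4 * h + 2 * q - 1 \<or> \<bar>2 * i - 2 * i'\<bar> \<ge> 4 * h + 2 * q - 1"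
    using hex_norm_ge[OF far_norm] .
  have u: "\<bar>i\<bar> + \<bar>j\<bar> = 2 * h + q" and u': "\<bar>i'\<bar> + \<bar>j'\<bar> = 2 * h + q"
    and w: "\<bar>s\<bar> + \<bar>t\<bar> = 2 * h + q - 1"
    and sg: "i \<ge> 0 \<and> s \<le> 0 \<or> i \<le> 0 \<and> s \<ge> 0" "j \<ge> 0 \<and> t \<le> 0 \<or> j \<le> 0 \<and> t \<ge> 0"
    and sg': "i' \<ge> 0 \<and> s \<le> 0 \<or> i' \<le> 0 \<and> s \<ge> 0" "j' \<ge> 0 \<and> t \<le> 0 \<or> j' \<le> 0 \<and> t \<ge> 0"
    using A A' unfolding l1_antipodal_def by auto
  have t0: "t \<noteq> 0"
  proof
    assume "t = 0"
    then have "\<bar>s\<bar> = 2 * h + q - 1" using w by simp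
    then show False using w2 h q by arith
  qed
  have ib: "i \<le> h + q" "i \<ge> -h" "i' \<le> h + q" "i' \<ge> -h" using u2 u'2 q by arith+
  have jj: "(j \<le> 0 \<and> j' \<le> 0) \<or> (j \<ge> 0 \<and> j' \<ge> 0)" using sg(2) sg'(2) t0 by linarith
  show ?thesis
  proof (cases "s = 0")
    case False
    \<comment> \<open>then \<open>(i, j)\<close> and \<open>(i', j')\<close> lie in a common quadrant, hence are close\<close>
    have ii: "(i \<le> 0 \<and> i' \<le> 0) \<or> (i \<ge> 0 \<and> i' \<ge> 0)" using sg(1) sg'(1) False by linarith
    have "\<bar>i\<bar> - \<bar>i'\<bar> = \<bar>j'\<bar> - \<bar>j\<bar>" using u u' by linarith
    moreover have "\<bar>j - j'\<bar> = \<bar>\<bar>j\<bar> - \<bar>j'\<bar>\<bar>" and "\<bar>i - i'\<bar> = \<bar>\<bar>i\<bar> - \<bar>i'\<bar>\<bar>"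
      using ii jj by auto
    ultimately have "\<bar>j - j'\<bar> = \<bar>i - i'\<bar>" by (metis abs_minus_commute)
    moreover have "\<bar>i - i'\<bar> \<le> h + q" using ii ib q by arith
    ultimately show ?thesis using far h by linarith
  next
    case True
    have "j - j' = \<bar>i\<bar> - \<bar>i'\<bar> \<or> j - j' = \<bar>i'\<bar> - \<bar>i\<bar>" using jj u u' by arith
    then have "\<bar>j - j'\<bar> = \<bar>\<bar>i\<bar> - \<bar>i'\<bar>\<bar>" by auto
    then have "\<bar>i - i'\<bar> + \<bar>j - j'\<bar> \<le> 2 * h + 2 * q" using ib q by arith
    then have "\<bar>2 * i - 2 * i'\<bar> \<ge> 4 * h + 2 * q - 1" using far h by linarith
    then have ii: "(i = h + q \<and> i' = -h) \<or> (i' = h + q \<and> i = -h)" using ib by arith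
    have abs_hq: "\<bar>h + q\<bar> = h + q" "\<bar>-h\<bar> = h" using h q by auto
    show ?thesis
    proof (cases "t > 0")
      case True
      then have "j \<le> 0" "j' \<le> 0" using sg(2) sg'(2) by linarith+
      then have "j = -(2 * h + q) + \<bar>i\<bar>" "j' = -(2 * h + q) + \<bar>i'\<bar>" using u u' by simp_all
      with ii abs_hq have "(i, j) \<in> upper_triple h q \<and> (i', j') \<in> upper_triple h q"
        unfolding upper_triple_def by (elim disjE conjE) simp_all
      then show ?thesis by blast
    next
      case False
      then have "j \<ge> 0" "j' \<ge> 0" using sg(2) sg'(2) t0 by linarith+
      then have "j = 2 * h + q - \<bar>i\<bar>" "j' = 2 * h + q - \<bar>i'\<bar>" using u u' by simp_all
      with ii abs_hq have "(i, j) \<in> lower_triple h q \<and> (i', j') \<in> lower_triple h q"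
        unfolding lower_triple_def by (elim disjE conjE) simp_all
      then show ?thesis by blast
    qed
  qed
qed

lemma common_triple_l1_phi:
  fixes h q i j i' j' s t :: int
  assumes q: "q = 0 \<or> q = 1" and h: "h \<ge> 2"
    and A: "l1_antipodal (2 * h + q) i j s t" and B': "phi_antipodal (2 * h + q) (2 * i' - q) (2 * s + q - 1)"
    and u2: "\<bar>2 * i - q\<bar> \<le> 2 * h + q"
    and u': "\<bar>i'\<bar> + \<bar>j'\<bar> \<le> 2 * h + q" "even (i' + j' - q)"
    and far_norm: "4 * h + 2 * q - 1 \<le> hex_norm (i - i') (j - j') (2 * i - 2 * i')"
  shows "in_common_triple h q (i, j) (i', j')"
proof -
  have far: "\<bar>i - i'\<bar> + \<bar>j - j'\<bar> \<ge> 4 * h + 2 * q - 1 \<or> \<bar>2 * i - 2 * i'\<bar> \<ge> 4 * h + 2 * q - 1"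
    using hex_norm_ge[OF far_norm] .
  have u: "\<bar>i\<bar> + \<bar>j\<bar> = 2 * h + q" and sg: "i \<ge> 0 \<and> s \<le> 0 \<or> i \<le> 0 \<and> s \<ge> 0"
    using A unfolding l1_antipodal_def by auto
  have ib: "i \<le> h + q" "i \<ge> -h" using u2 q by arith+
  from B' have "(i' = h + q \<and> s < 0) \<or> (i' = -h \<and> s > 0)"
    using h q unfolding phi_antipodal_def by linarith
  then show ?thesis
  proof (elim disjE conjE)
    assume i': "i' = h + q" and "s < 0"
    then have i0: "i \<ge> 0" using sg by linarith
    have aj': "\<bar>j'\<bar> \<le> h" using u'(1) i' q by arith
    have N: "\<bar>i - i'\<bar> + \<bar>j - j'\<bar> \<ge> 4 * h + 2 * q - 1"
      using far i' i0 ib h q by arith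
    then have "i = 0" using i0 i' ib u aj' by arith
    show ?thesis
    proof (cases "j \<ge> 0")
      case True
      with \<open>i = 0\<close> u have j: "j = 2 * h + q" by arith
      then have "j' \<le> -h + 1" using N \<open>i = 0\<close> i' aj' h q by arith
      then have "j' = -h" using aj' u'(2) i' by presburger
      then show ?thesis using \<open>i = 0\<close> j i' unfolding upper_triple_def by simp
    next
      case False
      with \<open>i = 0\<close> u have j: "j = -(2 * h + q)" by arith
      then have "j' \<ge> h - 1" using N \<open>i = 0\<close> i' aj' h q by arith
      then have "j' = h" using aj' u'(2) i' by presburger
      then show ?thesis using \<open>i = 0\<close> j i' unfolding lower_triple_def by simp
    qed
  next
    assume i': "i' = -h" and "s > 0"
    then have i0: "i \<le> 0" using sg by linarith
    have aj': "\<bar>j'\<bar> \<le> h + q" using u'(1) i' q by arith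
    have N: "\<bar>i - i'\<bar> + \<bar>j - j'\<bar> \<ge> 4 * h + 2 * q - 1"
      using far i' i0 ib h q by arith
    then have "i = 0" using i0 i' ib u aj' by arith
    show ?thesis
    proof (cases "j \<ge> 0")
      case True
      with \<open>i = 0\<close> u have j: "j = 2 * h + q" by arith
      then have "j' \<le> -(h + q) + 1" using N \<open>i = 0\<close> i' aj' h q by arith
      then have "j' = -(h + q)" using aj' u'(2) i' by presburger
      then show ?thesis using \<open>i = 0\<close> j i' unfolding upper_triple_def by simp
    next
      case False
      with \<open>i = 0\<close> u have j: "j = -(2 * h + q)" by arith
      then have "j' \<ge> h + q - 1" using N \<open>i = 0\<close> i' aj' h q by arith
      then have "j' = h + q" using aj' u'(2) i' by presburger
      then show ?thesis using \<open>i = 0\<close> j i' unfolding lower_triple_def by simp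
    qed
  qed
qed

lemma not_both_phi_antipodal:
  fixes h q i j i' j' s :: int
  assumes q: "q = 0 \<or> q = 1" and h: "h \<ge> 2"
    and u: "\<bar>i\<bar> + \<bar>j\<bar> \<le> 2 * h + q" and u': "\<bar>i'\<bar> + \<bar>j'\<bar> \<le> 2 * h + q"
    and B: "phi_antipodal (2 * h + q) (2 * i - q) (2 * s + q - 1)"
    and B': "phi_antipodal (2 * h + q) (2 * i' - q) (2 * s + q - 1)"
    and far_norm: "4 * h + 2 * q - 1 \<le> hex_norm (i - i') (j - j') (2 * i - 2 * i')"
  shows False
proof -
  have far: "\<bar>i - i'\<bar> + \<bar>j - j'\<bar> \<ge> 4 * h + 2 * q - 1 \<or> \<bar>2 * i - 2 * i'\<bar> \<ge> 4 * h + 2 * q - 1"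
    using hex_norm_ge[OF far_norm] .
  have ii: "i' = i" "i = h + q \<or> i = -h"
    using B B' h q unfolding phi_antipodal_def by linarith+
  then have "\<bar>j\<bar> \<le> h + q" "\<bar>j'\<bar> \<le> h + q" using u u' q h by arith+
  then show False using far ii h q by arith
qed

lemma origin_sphere_PairE:
  assumes "v \<in> origin_sphere (2 * h + q)" and q: "q = 0 \<or> q = 1"
  obtains i j where "v = (i, j)" "even (i + j - q)" "hex_phi (i, j) = 2 * i - q"
    "hex_norm i j (2 * i - q) = 2 * h + q"
proof -
  obtain i j where v: "v = (i, j)" by fastforce
  with assms(1) have S: "(i, j) \<in> origin_sphere (2 * h + q)" by simp
  then have ev: "even (i + j - q)" and N: "hex_norm i j (2 * i - q) = 2 * h + q"
    unfolding origin_sphere_coords[OF q] by simp_all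
  show ?thesis by (rule that[OF v ev hex_phi_eq_of_even[OF ev q] N])
qed

lemma inner_origin_sphere_PairE:
  assumes "w \<in> origin_sphere (2 * h + q - 1)" and q: "q = 0 \<or> q = 1"
  obtains s t where "w = (s, t)" "hex_phi (s, t) = 2 * s + q - 1"
    "hex_norm s t (2 * s + q - 1) = 2 * h + q - 1"
proof -
  have r: "2 * h + q - 1 = 2 * (h + q - 1) + (1 - q)" and q': "1 - q = 0 \<or> 1 - q = 1"
    using q by auto
  obtain s t where "w = (s, t)" "hex_phi (s, t) = 2 * s - (1 - q)"
    "hex_norm s t (2 * s - (1 - q)) = 2 * (h + q - 1) + (1 - q)"
    using origin_sphere_PairE[OF assms(1)[unfolded r] q'] by blast
  moreover have "2 * s - (1 - q) = 2 * s + q - 1" by simp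
  ultimately show ?thesis using that r by metis
qed

lemma antipodal_if_far_from_inner:
  assumes "hex_norm a b (2 * a - q) = 2 * h + q" "hex_phi (a, b) = 2 * a - q"
    and "hex_norm s t (2 * s + q - 1) = 2 * h + q - 1" "hex_phi (s, t) = 2 * s + q - 1"
    and "4 * h + 2 * q - 1 \<le> hex_metric (a, b) (s, t)"
  shows "l1_antipodal (2 * h + q) a b s t \<or> phi_antipodal (2 * h + q) (2 * a - q) (2 * s + q - 1)"
proof (rule antipodal_if_far)
  have "4 * h + 2 * q - 1 \<le> hex_metric (s, t) (a, b)"
    using assms(5) hex_metric_commute[of "(a, b)" "(s, t)"] by linarith
  then show "2 * (2 * h + q) - 1 \<le> hex_norm (a - s) (b - t) (2 * a - q - (2 * s + q - 1))"
    unfolding hex_metric_Pair assms(2,4) by simp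
qed (use assms(1,3) in simp_all)

theorem far_pair_in_common_triple:
  assumes q: "q = 0 \<or> q = 1" and h: "h \<ge> 2"
    and u: "u \<in> origin_sphere (2 * h + q)" and u': "u' \<in> origin_sphere (2 * h + q)"
    and w: "w \<in> origin_sphere (2 * h + q - 1)"
    and far: "hex_metric u w \<ge> 4 * h + 2 * q - 1" "hex_metric u' w \<ge> 4 * h + 2 * q - 1"
      "hex_metric u u' \<ge> 4 * h + 2 * q - 1"
  shows "in_common_triple h q u u'"
proof -
  obtain i j where ij: "u = (i, j)" "even (i + j - q)" "hex_phi (i, j) = 2 * i - q"
    "hex_norm i j (2 * i - q) = 2 * h + q"
    using origin_sphere_PairE[OF u q] .
  obtain i' j' where ij': "u' = (i', j')" "even (i' + j' - q)" "hex_phi (i', j') = 2 * i' - q"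
    "hex_norm i' j' (2 * i' - q) = 2 * h + q"
    using origin_sphere_PairE[OF u' q] .
  obtain s t where st: "w = (s, t)" "hex_phi (s, t) = 2 * s + q - 1"
    "hex_norm s t (2 * s + q - 1) = 2 * h + q - 1"
    using inner_origin_sphere_PairE[OF w q] .
  have metric: "hex_metric (a, b) (c, d) = hex_norm (c - a) (d - b) (hex_phi (c, d) - hex_phi (a, b))"
    for a b c d by (rule hex_metric_Pair)
  have "4 * h + 2 * q - 1 \<le> hex_metric (i, j) (i', j')"
    and "4 * h + 2 * q - 1 \<le> hex_metric (i', j') (i, j)"
    using far(3)[unfolded ij(1) ij'(1)] hex_metric_commute[of "(i, j)" "(i', j')"] by linarith+
  moreover have "2 * i - q - (2 * i' - q) = 2 * i - 2 * i'" "2 * i' - q - (2 * i - q) = 2 * i' - 2 * i"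
    by simp_all
  ultimately have F: "4 * h + 2 * q - 1 \<le> hex_norm (i - i') (j - j') (2 * i - 2 * i')"
    "4 * h + 2 * q - 1 \<le> hex_norm (i' - i) (j' - j) (2 * i' - 2 * i)"
    unfolding metric ij(3) ij'(3) by simp_all
  have U2: "\<bar>2 * i - q\<bar> \<le> 2 * h + q" "\<bar>2 * i' - q\<bar> \<le> 2 * h + q"
    and U1: "\<bar>i\<bar> + \<bar>j\<bar> \<le> 2 * h + q" "\<bar>i'\<bar> + \<bar>j'\<bar> \<le> 2 * h + q"
    and W2: "\<bar>2 * s + q - 1\<bar> \<le> 2 * h + q - 1"
    using hex_norm_eq[OF ij(4)] hex_norm_eq[OF ij'(4)] hex_norm_eq[OF st(3)] by auto
  from antipodal_if_far_from_inner[OF ij(4,3) st(3,2) far(1)[unfolded ij(1) st(1)]]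
    antipodal_if_far_from_inner[OF ij'(4,3) st(3,2) far(2)[unfolded ij'(1) st(1)]]
  have "in_common_triple h q (i, j) (i', j')"
  proof (elim disjE)
    assume "l1_antipodal (2 * h + q) i j s t" "l1_antipodal (2 * h + q) i' j' s t"
    then show ?thesis using common_triple_l1_l1[OF q h _ _ U2 W2 F(1)] by blast
  next
    assume "l1_antipodal (2 * h + q) i j s t" "phi_antipodal (2 * h + q) (2 * i' - q) (2 * s + q - 1)"
    then show ?thesis using common_triple_l1_phi[OF q h _ _ U2(1) U1(2) ij'(2) F(1)] by blast
  next
    assume "phi_antipodal (2 * h + q) (2 * i - q) (2 * s + q - 1)" "l1_antipodal (2 * h + q) i' j' s t"
    then show ?thesis using common_triple_l1_phi[OF q h _ _ U2(2) U1(1) ij(2) F(2)] by blast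
  next
    assume "phi_antipodal (2 * h + q) (2 * i - q) (2 * s + q - 1)"
      "phi_antipodal (2 * h + q) (2 * i' - q) (2 * s + q - 1)"
    then show ?thesis using not_both_phi_antipodal[OF q h U1 _ _ F(1)] by blast
  qed
  then show ?thesis using ij(1) ij'(1) by simp
qed

lemma triple_not_all_far:
  fixes h q s t c d e :: int
  assumes q: "q = 0 \<or> q = 1" and h: "h \<ge> 2"
    and w: "\<bar>s\<bar> + \<bar>t\<bar> \<le> 2 * h + q - 1" "\<bar>2 * s + q - 1\<bar> \<le> 2 * h + q - 1"
    and cde: "(c = 2 * h + q \<and> d = -h \<and> e = -(h + q)) \<or> (c = -(2 * h + q) \<and> d = h \<and> e = h + q)"
    and f0: "4 * h + 2 * q - 1 \<le> \<bar>s\<bar> + \<bar>t - c\<bar> \<or> 4 * h + 2 * q - 1 \<le> \<bar>2 * s + q - 1 + q\<bar>"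
    and fR: "4 * h + 2 * q - 1 \<le> \<bar>s - (h + q)\<bar> + \<bar>t - d\<bar> \<or> 4 * h + 2 * q - 1 \<le> \<bar>2 * s + q - 1 - (2 * h + q)\<bar>"
    and fL: "4 * h + 2 * q - 1 \<le> \<bar>s + h\<bar> + \<bar>t - e\<bar> \<or> 4 * h + 2 * q - 1 \<le> \<bar>2 * s + q - 1 + (2 * h + q)\<bar>"
  shows False
proof -
  have sb: "s \<le> h" "-(h + q) < s" using w(2) q by arith+
  then have abs_sR: "\<bar>s - (h + q)\<bar> = h + q - s" and abs_sL: "\<bar>s + h\<bar> = s + h" using q by arith+
  have "\<bar>2 * s + q - 1 + q\<bar> < 4 * h + 2 * q - 1" using w(2) q h by arith
  then have A0: "4 * h + 2 * q - 1 \<le> \<bar>s\<bar> + \<bar>t - c\<bar>" using f0 by linarith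
  have "2 * s + q - 1 \<noteq> 1 - (2 * h + q) \<or> 2 * s + q - 1 \<noteq> 2 * h + q - 1" using h q by linarith
  moreover have "2 * s + q - 1 = 1 - (2 * h + q)" if "\<bar>s - (h + q)\<bar> + \<bar>t - d\<bar> < 4 * h + 2 * q - 1"
    using that fR w(2) by arith
  moreover have "2 * s + q - 1 = 2 * h + q - 1" if "\<bar>s + h\<bar> + \<bar>t - e\<bar> < 4 * h + 2 * q - 1"
    using that fL w(2) by arith
  \<comment> \<open>\<open>(s, t)\<close> is L1-antipodal to \<open>(0, c)\<close>, hence L1-close to the two other vertices\<close>
  moreover from cde have "\<bar>s - (h + q)\<bar> + \<bar>t - d\<bar> < 4 * h + 2 * q - 1 \<and> \<bar>s + h\<bar> + \<bar>t - e\<bar> < 4 * h + 2 * q - 1"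
  proof (elim disjE conjE)
    assume c: "c = 2 * h + q" and d: "d = -h" and e: "e = -(h + q)"
    have "t < 0" using A0 c w(1) sb h q by arith
    then show ?thesis using abs_sR abs_sL d e w(1) sb h q by arith
  next
    assume c: "c = -(2 * h + q)" and d: "d = h" and e: "e = h + q"
    have "t > 0" using A0 c w(1) sb h q by arith
    then show ?thesis using abs_sR abs_sL d e w(1) sb h q by arith
  qed
  ultimately show False by blast
qed

theorem inner_point_near_triple:
  assumes q: "q = 0 \<or> q = 1" and h: "h \<ge> 2"
    and T: "T = upper_triple h q \<or> T = lower_triple h q"
    and w: "w \<in> origin_sphere (2 * h + q - 1)"
  shows "\<exists>v\<in>T. hex_metric v w < 4 * h + 2 * q - 1"
proof (rule ccontr)
  assume "\<not> ?thesis"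
  then have far: "4 * h + 2 * q - 1 \<le> hex_metric v w" if "v \<in> T" for v
    using that by force
  obtain s t where st: "w = (s, t)" "hex_phi (s, t) = 2 * s + q - 1"
    "hex_norm s t (2 * s + q - 1) = 2 * h + q - 1"
    using inner_origin_sphere_PairE[OF w q] .
  obtain c d e where
    cde: "(c = 2 * h + q \<and> d = -h \<and> e = -(h + q)) \<or> (c = -(2 * h + q) \<and> d = h \<and> e = h + q)"
    and T_eq: "T = {(0, c), (-h, e), (h + q, d)}"
    using T unfolding upper_triple_def lower_triple_def by blast
  have "even (0 + c - q)" "even ((h + q) + d - q)" "even ((-h) + e - q)"
    using cde q by auto
  then have phi: "hex_phi (0, c) = 2 * 0 - q" "hex_phi (h + q, d) = 2 * (h + q) - q"
    "hex_phi (-h, e) = 2 * (-h) - q"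
    using hex_phi_eq_of_even q by blast+
  have far_norm: "4 * h + 2 * q - 1 \<le> hex_norm (s - a) (t - a') (2 * s + q - 1 - hex_phi (a, a'))"
    if "(a, a') \<in> T" for a a'
    using far[OF that] hex_metric_commute[of "(a, a')" w] unfolding st(1) hex_metric_Pair st(2)
    by linarith
  have f0: "4 * h + 2 * q - 1 \<le> \<bar>s\<bar> + \<bar>t - c\<bar> \<or> 4 * h + 2 * q - 1 \<le> \<bar>2 * s + q - 1 + q\<bar>"
    using hex_norm_ge[OF far_norm[of 0 c]] T_eq phi by simp
  have fR: "4 * h + 2 * q - 1 \<le> \<bar>s - (h + q)\<bar> + \<bar>t - d\<bar>
      \<or> 4 * h + 2 * q - 1 \<le> \<bar>2 * s + q - 1 - (2 * h + q)\<bar>"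
    using hex_norm_ge[OF far_norm[of "h + q" d]] T_eq phi by (simp add: algebra_simps)
  have fL: "4 * h + 2 * q - 1 \<le> \<bar>s + h\<bar> + \<bar>t - e\<bar> \<or> 4 * h + 2 * q - 1 \<le> \<bar>2 * s + q - 1 + (2 * h + q)\<bar>"
    using hex_norm_ge[OF far_norm[of "-h" e]] T_eq phi by (simp add: algebra_simps)
  have "\<bar>s\<bar> + \<bar>t\<bar> \<le> 2 * h + q - 1" "\<bar>2 * s + q - 1\<bar> \<le> 2 * h + q - 1"
    using hex_norm_eq[OF st(3)] by auto
  from triple_not_all_far[OF q h this cde f0 fR fL] show False .
qed

lemma card_image_collisions_in_blocks:
  assumes S: "finite S" and AB: "A \<subseteq> S" "B \<subseteq> S" "A \<inter> B = {}"
    and coll: "\<And>u v. u \<in> S \<Longrightarrow> v \<in> S \<Longrightarrow> u \<noteq> v \<Longrightarrow> g u = g v \<Longrightarrow>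
      (u \<in> A \<and> v \<in> A) \<or> (u \<in> B \<and> v \<in> B)"
  shows "card (g ` S) = card (S - (A \<union> B)) + card (g ` A) + card (g ` B)"
proof -
  let ?R = "S - (A \<union> B)"
  have fin: "finite ?R" "finite A" "finite B" using S AB finite_subset by blast+
  have "g ` S = g ` ?R \<union> g ` A \<union> g ` B" using AB by blast
  moreover have "inj_on g ?R" using coll by (blast intro: inj_onI)
  moreover have "g ` ?R \<inter> (g ` A \<union> g ` B) = {}" and "g ` A \<inter> g ` B = {}"
    using coll AB by blast+
  ultimately show ?thesis
    using fin by (simp add: card_Un_disjoint card_image Int_Un_distrib2 Un_assoc)
qed

lemma triple_not_monochromatic:
  fixes g :: "vert \<Rightarrow> 'c"
  assumes q: "q = 0 \<or> q = 1" and h: "h \<ge> 2"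
    and T: "T = upper_triple h q \<or> T = lower_triple h q"
    and col: "\<And>u v. u \<noteq> v \<Longrightarrow> hex_metric u v \<le> 4 * h + 2 * q - 2 \<Longrightarrow> g u \<noteq> g v"
    and twin: "\<And>v. v \<in> T \<Longrightarrow> \<exists>w \<in> origin_sphere (2 * h + q - 1). g v = g w"
  shows "card (g ` T) \<ge> 2"
proof (rule ccontr)
  have "card T = 3" using T card_triples[OF h q] by blast
  then have T_fin: "finite T" and "T \<noteq> {}" using card_gt_0_iff[of T] by simp_all
  assume "\<not> card (g ` T) \<ge> 2"
  then have "card (g ` T) \<le> Suc 0" by simp
  moreover have "finite (g ` T)" using T_fin by simp
  ultimately have "\<forall>x \<in> g ` T. \<forall>y \<in> g ` T. x = y"
    using card_le_Suc0_iff_eq by blast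
  then have mono: "g v = g v'" if "v \<in> T" "v' \<in> T" for v v'
    using that by blast
  obtain v0 where "v0 \<in> T" using \<open>T \<noteq> {}\<close> by blast
  then obtain w where w: "w \<in> origin_sphere (2 * h + q - 1)" "g v0 = g w" using twin by blast
  obtain v where v: "v \<in> T" "hex_metric v w < 4 * h + 2 * q - 1"
    using inner_point_near_triple[OF q h T w(1)] by blast
  have "v \<in> origin_sphere (2 * h + q)" using v(1) T triples_subset_origin_sphere[OF h q] by blast
  with w(1) have "v \<noteq> w" unfolding origin_sphere_def by auto
  moreover have "g v = g w" using mono[OF v(1) \<open>v0 \<in> T\<close>] w(2) by simp
  moreover have "hex_metric v w \<le> 4 * h + 2 * q - 2" using v(2) by linarith
  ultimately show False using col by blast
qed

lemma colour_twin_on_inner_sphere: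
  assumes col: "\<And>u v. u \<noteq> v \<Longrightarrow> hex_metric u v \<le> 2 * k - 2 \<Longrightarrow> g u \<noteq> g v"
    and u: "u \<in> origin_sphere k" and w: "hex_metric (0, 0) w \<le> k - 1" and "g u = g w"
  shows "w \<in> origin_sphere (k - 1)"
proof -
  have u0: "hex_metric (0, 0) u = k" using u by (simp add: origin_sphere_def)
  with w have "u \<noteq> w" by auto
  then have "\<not> hex_metric u w \<le> 2 * k - 2" using col \<open>g u = g w\<close> by blast
  moreover have "hex_metric u w \<le> hex_metric (0, 0) u + hex_metric (0, 0) w"
    using hex_metric_triangle[of u w "(0, 0)"] hex_metric_commute[of u "(0, 0)"] by linarith
  ultimately have "hex_metric (0, 0) w = k - 1" using u0 w by linarith
  then show ?thesis by (simp add: origin_sphere_def)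
qed

lemma same_colour_in_common_triple:
  assumes q: "q = 0 \<or> q = 1" and h: "h \<ge> 2"
    and col: "\<And>u v. u \<noteq> v \<Longrightarrow> hex_metric u v \<le> 4 * h + 2 * q - 2 \<Longrightarrow> g u \<noteq> g v"
    and u: "u \<in> origin_sphere (2 * h + q)" and u': "u' \<in> origin_sphere (2 * h + q)"
    and w: "w \<in> origin_sphere (2 * h + q - 1)"
    and "u \<noteq> u'" and "g u = g u'" and "g u = g w"
  shows "in_common_triple h q u u'"
proof -
  have far: "4 * h + 2 * q - 1 \<le> hex_metric a b" if "a \<noteq> b" "g a = g b" for a b
  proof -
    have "\<not> hex_metric a b \<le> 4 * h + 2 * q - 2" using col that by blast
    then show ?thesis by linarith
  qed
  have "u \<noteq> w" "u' \<noteq> w" using u u' w unfolding origin_sphere_def by auto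
  with assms(7-9) show ?thesis
    using far_pair_in_common_triple[OF q h u u' w] far by metis
qed

theorem origin_sphere_colour_outside_ball:
  fixes g :: "vert \<Rightarrow> 'c" and k :: int
  assumes k: "k \<ge> 4"
    and col: "\<And>u v. u \<noteq> v \<Longrightarrow> hex_metric u v \<le> 2 * k - 2 \<Longrightarrow> g u \<noteq> g v"
  shows "\<exists>u \<in> origin_sphere k. g u \<notin> g ` {w. hex_metric (0, 0) w \<le> k - 1}"
proof (rule ccontr)
  define h q where "h = k div 2" and "q = k mod 2"
  have kq: "k = 2 * h + q" and q: "q = 0 \<or> q = 1" and h: "h \<ge> 2"
    using k unfolding h_def q_def by auto
  let ?S = "origin_sphere k" and ?W = "origin_sphere (k - 1)"
  let ?U = "upper_triple h q" and ?L = "lower_triple h q"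
  assume contra: "\<not> ?thesis"
  have twin: "\<exists>w \<in> ?W. g u = g w" if "u \<in> ?S" for u
  proof -
    from contra that obtain w where w: "hex_metric (0, 0) w \<le> k - 1" "g u = g w" by blast
    have "w \<in> ?W" using col that w by (rule colour_twin_on_inner_sphere)
    with w(2) show ?thesis by blast
  qed
  have col': "g u \<noteq> g v" if "u \<noteq> v" "hex_metric u v \<le> 4 * h + 2 * q - 2" for u v
    using col[OF that(1)] that(2) kq by simp
  have UL: "?U \<subseteq> ?S" "?L \<subseteq> ?S" using triples_subset_origin_sphere[OF h q] kq by simp_all
  have "card (g ` T) \<ge> 2" if T: "T = ?U \<or> T = ?L" for T
  proof (rule triple_not_monochromatic[OF q h T col'])
    show "\<exists>w \<in> origin_sphere (2 * h + q - 1). g v = g w" if "v \<in> T" for v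
      using twin[of v] that T UL unfolding kq by blast
  qed
  then have colours_UL: "card (g ` ?U) \<ge> 2" "card (g ` ?L) \<ge> 2" by simp_all
  have finS: "finite ?S" and cS: "card ?S = nat (3 * k)" using card_origin_sphere[of k] k by simp_all
  have finW: "finite ?W" and cW: "card ?W = nat (3 * (k - 1))"
    using card_origin_sphere[of "k - 1"] k by simp_all
  have "card (?U \<union> ?L) = 6" using card_triples[OF h q] by (simp add: card_Un_disjoint card_ge_0_finite)
  then have "card (?S - (?U \<union> ?L)) = card ?S - 6" using UL finS by (simp add: card_Diff_subset finite_subset)
  moreover have "card (g ` ?S) = card (?S - (?U \<union> ?L)) + card (g ` ?U) + card (g ` ?L)"
  proof (rule card_image_collisions_in_blocks[OF finS UL card_triples(3)[OF h q]])
    fix u u' assume "u \<in> ?S" "u' \<in> ?S" "u \<noteq> u'" "g u = g u'"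
    moreover obtain w where "w \<in> ?W" "g u = g w" using twin \<open>u \<in> ?S\<close> by blast
    ultimately show "in_common_triple h q u u'"
      using same_colour_in_common_triple[where g = g, OF q h col'] unfolding kq by blast
  qed
  moreover have "card (g ` ?S) \<le> card ?W"
  proof -
    have "g ` ?S \<subseteq> g ` ?W" using twin by blast
    then have "card (g ` ?S) \<le> card (g ` ?W)" using finW by (simp add: card_mono)
    also have "\<dots> \<le> card ?W" using finW by (rule card_image_le)
    finally show ?thesis .
  qed
  moreover have "card ?S = card ?W + 3" using cS cW k by (simp add: nat_diff_distrib)
  moreover have "card ?W \<ge> 9" using cW k by simp
  ultimately show False using colours_UL by linarith
qed

definition translate :: "vert \<Rightarrow> vert \<Rightarrow> vert" where
  "translate x v = (fst x + fst v, snd x + snd v)"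

lemma translate_inj: "translate x u = translate x v \<longleftrightarrow> u = v"
  unfolding translate_def by (cases u; cases v) auto

lemma hex_metric_translate:
  assumes "right_vertex x"
  shows "hex_metric (translate x u) (translate x v) = hex_metric u v"
proof -
  have "hex_phi (translate x w) = 2 * fst x + hex_phi w" for w
    using assms unfolding translate_def right_vertex_def hex_phi_def
    by (cases "even (fst w + snd w)") (auto; presburger)+
  then show ?thesis unfolding hex_metric_def by (simp add: translate_def)
qed

lemma hex_dist_translate:
  "right_vertex x \<Longrightarrow> hex_dist (translate x u) (translate x v) = nat (hex_metric u v)"
  by (simp add: hex_dist_eq_metric hex_metric_translate)

lemma translate_origin: "translate x (0, 0) = x"
  by (simp add: translate_def)

lemma Collect_eq_translate_image: "{v. P v} = translate x ` {w. P (translate x w)}"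
proof (intro set_eqI iffI)
  fix v assume "v \<in> {v. P v}"
  then show "v \<in> translate x ` {w. P (translate x w)}"
    by (intro image_eqI[of v "translate x" "(fst v - fst x, snd v - snd x)"]) (simp_all add: translate_def)
qed auto

lemma sphere_eq_translate:
  assumes "right_vertex x"
  shows "sphere x k = translate x ` origin_sphere (int k)"
proof -
  have "hex_dist x (translate x w) = k \<longleftrightarrow> w \<in> origin_sphere (int k)" for w
    using hex_dist_translate[OF assms, of "(0, 0)" w] hex_metric_nonneg[of "(0, 0)" w]
    unfolding translate_origin origin_sphere_def by auto
  then show ?thesis
    unfolding sphere_def by (subst Collect_eq_translate_image[of _ x]) simp
qed

lemma disk_verts_eq_translate:
  assumes "right_vertex x"
  shows "disk_verts x p = translate x ` {w. hex_metric (0, 0) w \<le> int p}"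
proof -
  have "hex_dist (translate x w) x \<le> p \<longleftrightarrow> hex_metric (0, 0) w \<le> int p" for w
    using hex_dist_translate[OF assms, of w "(0, 0)"] hex_metric_commute[of w "(0, 0)"]
    unfolding translate_origin by auto
  then show ?thesis
    unfolding disk_verts_def by (subst Collect_eq_translate_image[of _ x]) simp
qed

lemma distance_coloring_translate:
  assumes "right_vertex x" and "distance_coloring l n f"
    and "u \<noteq> v" and "hex_metric u v \<le> int l"
  shows "f (translate x u) \<noteq> f (translate x v)"
proof -
  have "translate x u \<noteq> translate x v" using assms(3) by (simp add: translate_inj)
  moreover have "hex_dist (translate x u) (translate x v) \<le> l"
    using assms(4) by (simp add: hex_dist_translate[OF assms(1)] nat_le_iff)
  ultimately show ?thesis using assms(2) unfolding distance_coloring_def by blast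
qed

theorem theorem1:
  fixes p n :: nat and x :: vert and f :: "vert \<Rightarrow> nat"
  assumes "p \<ge> 3" and "right_vertex x" and "distance_coloring (2 * p) n f"
  shows "\<exists>u \<in> sphere x (p + 1). f u \<notin> f ` disk_verts x p"
proof -
  have "(f \<circ> translate x) u \<noteq> (f \<circ> translate x) v"
    if "u \<noteq> v" "hex_metric u v \<le> 2 * int (p + 1) - 2" for u v
    using distance_coloring_translate[OF assms(2,3) that(1)] that(2) by simp
  then obtain u where "u \<in> origin_sphere (int (p + 1))"
    and "f (translate x u) \<notin> f ` translate x ` {w. hex_metric (0, 0) w \<le> int p}"
    using origin_sphere_colour_outside_ball[of "int (p + 1)" "f \<circ> translate x"] assms(1)
    by (auto simp: image_comp)
  then show ?thesis
    unfolding sphere_eq_translate[OF assms(2)] disk_verts_eq_translate[OF assms(2)] by blast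
qed

end
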